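(* Let $\nu\in(0,1]$, $\varrho>0$, $\delta>0$ and $x\in K_\nu^\varrho$. Let $g^\delta\in\mathbb Y$ satisfy $\|g^\delta-Ax\|_{\mathbb Y}\le\delta$, let $\alpha>0$ and $\hat x_\alpha\in R_\alpha(g^\delta)$. 1. (a priori rule) Let $c_r\ge c_l>0$. If $c_l\varrho^{-1/\nu}\delta^{1/\nu}\le\alpha\le c_r\varrho^{-1/\nu}\delta^{1/\nu}$, then $L(x,\hat x_\alpha)\le\Omega(c_1\delta,K_\nu^{c_2\varrho})$ with $c_1:=1+c_r^\nu$ and $c_2:=2+c_l^{-\nu}$. 2. (discrepancy principle) Let $C_D>c_D>1$. If $c_D\delta\le\|g^\delta-A\hat x_\alpha\|_{\mathbb Y}\le C_D\delta$, then $L(x,\hat x_\alpha)\le\Omega(d_1\delta,K_\nu^{d_2\varrho})$ with $d_1:=1+C_D$ and $d_2:=2+(c_D-1)^{-1}$.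
   Context: Standing setting: $\mathbb X$ is a real Banach space and $\tau$ is a topology on $\mathbb X$ such that $(\mathbb X,\tau)$ is a locally convex Hausdorff space. $\mathcal R:\mathbb X\to(-\infty,\infty]$ is proper and convex, and for every $\lambda\in\mathbb R$ the sublevel set $\{x\in\mathbb X:\mathcal R(x)\le\lambda\}$ is $\tau$-compact. $\mathbb Y$ is a real Hilbert space and $A:\mathbb X\to\mathbb Y$ is linear and continuous from $(\mathbb X,\tau)$ to $\mathbb Y$ equipped with its weak topology. For $\alpha>0$, $g\in\mathbb Y$ and $x\in\mathrm{dom}(\mathcal R)$ let $T_\alpha(x,g):=\frac1{2\alpha}\|g-Ax\|_{\mathbb Y}^2+\mathcal R(x)$ and $R_\alpha(g):=\operatorname{argmin}_{x\in\mathrm{dom}(\mathcal R)}T_\alpha(x,g)$ (a nonempty set). For $\nu\ge0$ define $\varrho_\nu:\mathbb X\to[0,\infty]$ by $\varrho_\nu(x):=\sup\{\alpha^{-\nu}\|Ax-Ax_\alpha\|_{\mathbb Y}:\alpha>0,\ x_\alpha\in R_\alpha(Ax)\}$, and for $\varrho>0$ set $K_\nu^\varrho:=\{x\in\mathbb X:\varrho_\nu(x)\le\varrho\}$ and $K_\nu:=\{x\in\mathbb X:\varrho_\nu(x)<\infty\}$. Let $L:\mathbb X\times\mathbb X\to[0,\infty]$ satisfy the triangle inequality $L(x,z)\le L(x,y)+L(y,z)$. For $K\subset\mathbb X$ and $\delta>0$ the modulus of continuity is $\Omega(\delta,K):=\sup\{L(x_1,x_2):x_1,x_2\in K,\ \|Ax_1-Ax_2\|_{\mathbb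 Y}\le\delta\}$. *)

theory Defs
  imports "HOL-Analysis.Analysis"
begin

definition weak_topology :: "('y::real_inner) topology" where
  "weak_topology = topology_generated_by {{y. y \<bullet> v \<in> U} | v U. open U}"

definition lc_hausdorff_tvs :: "('x::real_vector) topology \<Rightarrow> bool" where
  "lc_hausdorff_tvs \<tau> \<longleftrightarrow>
     topspace \<tau> = UNIV \<and> Hausdorff_space \<tau> \<and>
     continuous_map (prod_topology \<tau> \<tau>) \<tau> (\<lambda>(x, y). x + y) \<and>
     continuous_map (prod_topology euclideanreal \<tau>) \<tau> (\<lambda>(a, x). a *\<^sub>R x) \<and>
     (\<forall>U. openin \<tau> U \<and> 0 \<in> U \<longrightarrow> (\<exists>V. openin \<tau> V \<and> 0 \<in> V \<and> convex V \<and> V \<subseteq> U))"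

definition proper_convex :: "('x::real_vector \<Rightarrow> ereal) \<Rightarrow> bool" where
  "proper_convex R \<longleftrightarrow>
     (\<forall>x. R x > -\<infinity>) \<and> (\<exists>x. R x < \<infinity>) \<and>
     (\<forall>x y t. 0 \<le> t \<and> t \<le> 1 \<longrightarrow>
        R (t *\<^sub>R x + (1 - t) *\<^sub>R y) \<le> ereal t * R x + ereal (1 - t) * R y)"

definition domR :: "('x \<Rightarrow> ereal) \<Rightarrow> 'x set" where
  "domR R = {x. R x < \<infinity>}"

definition Tfun :: "('x \<Rightarrow> 'y::real_normed_vector) \<Rightarrow> ('x \<Rightarrow> ereal) \<Rightarrow> real \<Rightarrow> 'x \<Rightarrow> 'y \<Rightarrow> ereal" where
  "Tfun A R \<alpha> x g = ereal (1 / (2 * \<alpha>) * (norm (g - A x))\<^sup>2) + R x"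

definition Rset :: "('x \<Rightarrow> 'y::real_normed_vector) \<Rightarrow> ('x \<Rightarrow> ereal) \<Rightarrow> real \<Rightarrow> 'y \<Rightarrow> 'x set" where
  "Rset A R \<alpha> g = {x \<in> domR R. \<forall>z \<in> domR R. Tfun A R \<alpha> x g \<le> Tfun A R \<alpha> z g}"

definition rho_nu :: "('x \<Rightarrow> 'y::real_normed_vector) \<Rightarrow> ('x \<Rightarrow> ereal) \<Rightarrow> real \<Rightarrow> 'x \<Rightarrow> ereal" where
  "rho_nu A R \<nu> x = Sup {ereal (\<alpha> powr (-\<nu>) * norm (A x - A xa)) | \<alpha> xa. \<alpha> > 0 \<and> xa \<in> Rset A R \<alpha> (A x)}"

definition Kset :: "('x \<Rightarrow> 'y::real_normed_vector) \<Rightarrow> ('x \<Rightarrow> ereal) \<Rightarrow> real \<Rightarrow> real \<Rightarrow> 'x set" where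
  "Kset A R \<nu> \<rho> = {x. rho_nu A R \<nu> x \<le> ereal \<rho>}"

definition modulus :: "('x \<Rightarrow> 'x \<Rightarrow> ereal) \<Rightarrow> ('x \<Rightarrow> 'y::real_normed_vector) \<Rightarrow> real \<Rightarrow> 'x set \<Rightarrow> ereal" where
  "modulus L A \<delta> K = Sup {L x1 x2 | x1 x2. x1 \<in> K \<and> x2 \<in> K \<and> norm (A x1 - A x2) \<le> \<delta>}"

end

theory Submission
  imports Defs
begin

text \<open>
  A minimiser of the Tikhonov functional satisfies a variational inequality, which makes both
  \<open>g \<mapsto> A x\<^sub>\<alpha>(g)\<close> and the residual map \<open>g \<mapsto> g - A x\<^sub>\<alpha>(g)\<close> nonexpansive. Comparing the
  noisy reconstruction with a reconstruction from exact data therefore gives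
  \<open>\<parallel>g\<^sup>\<delta> - A x\<^sub>\<alpha>\<parallel>, \<parallel>A x - A x\<^sub>\<alpha>\<parallel> \<le> \<delta> + \<rho> \<alpha>\<^sup>\<nu>\<close>, and comparing the reconstructions from the data
  \<open>A x\<^sub>\<alpha>\<close> (with \<open>x\<^sub>\<alpha>\<close> itself for parameters below \<open>\<alpha>\<close>, with the exact-data reconstruction above)
  gives \<open>\<rho>\<^sub>\<nu>(x\<^sub>\<alpha>) \<le> 2\<rho> + \<alpha>\<^sup>-\<^sup>\<nu>\<delta>\<close>. Both parameter choice rules bound \<open>\<alpha>\<^sup>-\<^sup>\<nu>\<delta>\<close> by a multiple
  of \<open>\<rho>\<close> and \<open>\<parallel>A x - A x\<^sub>\<alpha>\<parallel>\<close> by a multiple of \<open>\<delta>\<close>, so \<open>x\<close> and \<open>x\<^sub>\<alpha>\<close> are two points of an enlarged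
  source set with close images, and the modulus of continuity bounds \<open>L x x\<^sub>\<alpha>\<close>.
  Minimisers exist because the sublevel sets of \<open>R\<close> are compact and the residual is
  lower semicontinuous for the weak topology.
\<close>

lemma proper_convex_finite_on_dom:
  assumes "proper_convex R" "z \<in> domR R"
  obtains r where "R z = ereal r"
  using assms unfolding proper_convex_def domR_def by (cases "R z") auto

lemma Rset_variational_inequality:
  fixes A :: "'x::real_vector \<Rightarrow> 'y::real_inner"
  assumes Rpc: "proper_convex R" and Alin: "linear A" and a: "0 < a"
    and u: "u \<in> Rset A R a g" and z: "z \<in> domR R"
  shows "real_of_ereal (R u) - real_of_ereal (R z) \<le> (g - A u) \<bullet> (A u - A z) / a"
proof -
  have "u \<in> domR R" using u by (simp add: Rset_def)
  then obtain ru where ru: "R u = ereal ru" using Rpc proper_convex_finite_on_dom by blast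
  obtain rz where rz: "R z = ereal rz" using Rpc z proper_convex_finite_on_dom by blast
  define e d where "e = g - A u" and "d = A z - A u"
  \<comment> \<open>Compare \<open>u\<close> with the points of the segment towards \<open>z\<close>; the quadratic term vanishes as \<open>t \<rightarrow> 0\<close>.\<close>
  have perturbed: "ru - rz \<le> - (e \<bullet> d) / a + t * ((d \<bullet> d) / (2 * a))" if t: "0 < t" "t \<le> 1" for t
  proof -
    define zt where "zt = t *\<^sub>R z + (1 - t) *\<^sub>R u"
    have "R zt \<le> ereal t * R z + ereal (1 - t) * R u"
      using Rpc t unfolding proper_convex_def zt_def by auto
    then have Rzt: "R zt \<le> ereal (t * rz + (1 - t) * ru)" by (simp add: ru rz)
    then have "zt \<in> domR R" by (auto simp: domR_def)
    then have "Tfun A R a u g \<le> Tfun A R a zt g" using u by (auto simp: Rset_def)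
    also have "\<dots> = ereal ((norm (g - A zt))\<^sup>2 / (2 * a)) + R zt" by (simp add: Tfun_def)
    also have "\<dots> \<le> ereal ((norm (g - A zt))\<^sup>2 / (2 * a)) + ereal (t * rz + (1 - t) * ru)"
      using Rzt by (rule add_left_mono)
    finally have "(norm e)\<^sup>2 / (2 * a) + ru \<le> (norm (g - A zt))\<^sup>2 / (2 * a) + (t * rz + (1 - t) * ru)"
      by (simp add: Tfun_def ru e_def)
    moreover have "A zt = t *\<^sub>R A z + (1 - t) *\<^sub>R A u"
      unfolding zt_def by (simp only: linear_add[OF Alin] linear_scale[OF Alin])
    then have "g - A zt = e - t *\<^sub>R d" by (simp add: e_def d_def algebra_simps)
    then have "(norm (g - A zt))\<^sup>2 = (norm e)\<^sup>2 + t * (- 2 * (e \<bullet> d) + t * (d \<bullet> d))"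
      unfolding power2_norm_eq_inner \<open>g - A zt = e - t *\<^sub>R d\<close>
      by (simp add: inner_diff_left inner_diff_right inner_commute algebra_simps)
    ultimately have "t * (ru - rz) \<le> t * (- (e \<bullet> d) / a + t * ((d \<bullet> d) / (2 * a)))"
      by (simp add: add_divide_distrib diff_divide_distrib algebra_simps)
    then show ?thesis using t by (simp add: mult_le_cancel_left_pos)
  qed
  have "((\<lambda>t. - (e \<bullet> d) / a + t * ((d \<bullet> d) / (2 * a))) \<longlongrightarrow> - (e \<bullet> d) / a) (at_right 0)"
    by (intro tendsto_eq_intros) auto
  moreover have "\<forall>\<^sub>F t in at_right 0. ru - rz \<le> - (e \<bullet> d) / a + t * ((d \<bullet> d) / (2 * a))"
    unfolding eventually_at_right_field using perturbed by (intro exI[of _ 1]) auto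
  ultimately have "ru - rz \<le> - (e \<bullet> d) / a" by (rule tendsto_lowerbound) simp
  then show ?thesis by (simp add: ru rz e_def d_def inner_diff_right)
qed

lemma inner_le_imp_norm_le:
  fixes p q :: "'a::real_inner"
  assumes "q \<bullet> q \<le> p \<bullet> q"
  shows "norm (p - q) \<le> norm p" and "norm q \<le> norm p"
proof -
  have "(norm (p - q))\<^sup>2 = (norm p)\<^sup>2 - 2 * (p \<bullet> q) + q \<bullet> q"
    unfolding power2_norm_eq_inner by (simp add: inner_diff_left inner_diff_right inner_commute)
  also have "\<dots> \<le> (norm p)\<^sup>2" using assms inner_ge_zero[of q] by linarith
  finally show "norm (p - q) \<le> norm p" by (rule power2_le_imp_le) simp
  have "norm q * norm q \<le> norm p * norm q"
    using assms norm_cauchy_schwarz[of p q] by (simp add: power2_norm_eq_inner[symmetric] power2_eq_square)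
  then show "norm q \<le> norm p"
    by (cases "q = 0") (simp_all add: mult_le_cancel_right_pos)
qed

lemma Rset_nonexpansive:
  fixes A :: "'x::real_vector \<Rightarrow> 'y::real_inner"
  assumes Rpc: "proper_convex R" and Alin: "linear A" and b: "0 < b"
    and u: "u \<in> Rset A R b g1" and w: "w \<in> Rset A R b g2"
  shows "norm ((g1 - A u) - (g2 - A w)) \<le> norm (g1 - g2)" and "norm (A u - A w) \<le> norm (g1 - g2)"
proof -
  have "u \<in> domR R" "w \<in> domR R" using u w by (simp_all add: Rset_def)
  then have "0 \<le> (g1 - A u) \<bullet> (A u - A w) / b + (g2 - A w) \<bullet> (A w - A u) / b"
    using Rset_variational_inequality[OF Rpc Alin b u] Rset_variational_inequality[OF Rpc Alin b w]
    by fastforce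
  then have "0 \<le> ((g1 - A u) - (g2 - A w)) \<bullet> (A u - A w)"
    using b by (simp add: add_divide_distrib[symmetric] zero_le_divide_iff inner_diff_left
        inner_diff_right algebra_simps)
  then have "(A u - A w) \<bullet> (A u - A w) \<le> (g1 - g2) \<bullet> (A u - A w)"
    by (simp add: inner_diff_left algebra_simps)
  from inner_le_imp_norm_le[OF this] show "norm ((g1 - A u) - (g2 - A w)) \<le> norm (g1 - g2)"
    and "norm (A u - A w) \<le> norm (g1 - g2)"
    by (simp_all add: algebra_simps)
qed

lemma Rset_image_dist_le:
  fixes A :: "'x::real_vector \<Rightarrow> 'y::real_inner"
  assumes Rpc: "proper_convex R" and Alin: "linear A" and a: "0 < a" and b: "0 < b"
    and xh: "xh \<in> Rset A R a g" and u: "u \<in> Rset A R b (A xh)"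
  shows "norm (A xh - A u) \<le> b / a * norm (g - A xh)"
proof -
  define q where "q = A xh - A u"
  have "xh \<in> domR R" "u \<in> domR R" using xh u by (simp_all add: Rset_def)
  then have "0 \<le> (g - A xh) \<bullet> q / a + (A xh - A u) \<bullet> (A u - A xh) / b"
    using Rset_variational_inequality[OF Rpc Alin a xh] Rset_variational_inequality[OF Rpc Alin b u]
    unfolding q_def by fastforce
  moreover have "(A xh - A u) \<bullet> (A u - A xh) = - (q \<bullet> q)"
    unfolding q_def by (metis inner_minus_right minus_diff_eq)
  ultimately have "q \<bullet> q / b \<le> (g - A xh) \<bullet> q / a" by simp
  also have "\<dots> \<le> norm (g - A xh) * norm q / a"
    using a by (simp add: divide_right_mono norm_cauchy_schwarz)
  finally have "norm q * norm q \<le> (b / a * norm (g - A xh)) * norm q"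
    using a b by (simp add: power2_norm_eq_inner[symmetric] power2_eq_square field_simps)
  then show ?thesis
    unfolding q_def[symmetric] using a b by (cases "q = 0") (auto intro: mult_right_le_imp_le)
qed

lemma power2_norm_le_iff_inner:
  fixes e :: "'a::real_inner"
  shows "(norm e)\<^sup>2 \<le> c \<longleftrightarrow> (\<forall>v. 2 * (e \<bullet> v) - v \<bullet> v \<le> c)"
proof
  assume "(norm e)\<^sup>2 \<le> c"
  moreover have "2 * (e \<bullet> v) - v \<bullet> v \<le> (norm e)\<^sup>2" for v
  proof -
    have "0 \<le> (e - v) \<bullet> (e - v)" by simp
    then show ?thesis
      by (simp add: power2_norm_eq_inner inner_diff_left inner_diff_right inner_commute)
  qed
  ultimately show "\<forall>v. 2 * (e \<bullet> v) - v \<bullet> v \<le> c" by (meson order.trans)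
next
  assume "\<forall>v. 2 * (e \<bullet> v) - v \<bullet> v \<le> c"
  then have "2 * (e \<bullet> e) - e \<bullet> e \<le> c" by blast
  then show "(norm e)\<^sup>2 \<le> c" by (simp add: power2_norm_eq_inner)
qed

lemma continuous_map_weak_topology_inner:
  "continuous_map weak_topology euclideanreal (\<lambda>y. y \<bullet> v)"
proof -
  have "openin weak_topology {y. y \<bullet> v \<in> U}" if "open U" for U
    unfolding weak_topology_def openin_topology_generated_by_iff
    using that by (intro generate_topology_on.Basis) blast
  moreover have "{y \<in> topspace weak_topology. y \<bullet> v \<in> U} = topspace weak_topology \<inter> {y. y \<bullet> v \<in> U}"
    for U by blast
  ultimately show ?thesis
    unfolding continuous_map_def by auto
qed

lemma closedin_residual_sublevel:
  assumes top: "topspace \<tau> = UNIV" and Acont: "continuous_map \<tau> weak_topology A"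
  shows "closedin \<tau> {z. (norm (y - A z))\<^sup>2 \<le> c}"
proof -
  have "{z. (norm (y - A z))\<^sup>2 \<le> c} =
      (\<Inter>v. {z \<in> topspace \<tau>. A z \<bullet> v \<in> {s. 2 * (y \<bullet> v) - v \<bullet> v - c \<le> 2 * s}})"
    unfolding power2_norm_le_iff_inner top by (auto simp: inner_diff_left algebra_simps)
  moreover have "closedin \<tau> {z \<in> topspace \<tau>. A z \<bullet> v \<in> {s. 2 * (y \<bullet> v) - v \<bullet> v - c \<le> 2 * s}}" for v
  proof (rule closedin_continuous_map_preimage)
    show "continuous_map \<tau> euclideanreal (\<lambda>z. A z \<bullet> v)"
      using continuous_map_compose[OF Acont continuous_map_weak_topology_inner] by (simp add: o_def)
    show "closedin euclideanreal {s. 2 * (y \<bullet> v) - v \<bullet> v - c \<le> 2 * s}"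
      by (simp add: closed_Collect_le continuous_intros)
  qed
  ultimately show ?thesis by (auto intro: closedin_Inter)
qed

lemma closedin_Tfun_sublevel:
  assumes top: "topspace \<tau> = UNIV" and haus: "Hausdorff_space \<tau>"
    and Rcomp: "\<And>c::real. compactin \<tau> {z. R z \<le> ereal c}"
    and Acont: "continuous_map \<tau> weak_topology A" and b: "0 < b"
  shows "closedin \<tau> {z. Tfun A R b z y \<le> ereal t}"
proof -
  define h where "h z = (norm (y - A z))\<^sup>2 / (2 * b)" for z
  have "Tfun A R b z y \<le> ereal t \<longleftrightarrow> (\<forall>s. h z \<le> s \<or> R z \<le> ereal (t - s))" for z
  proof (cases "R z")
    case (real r)
    have "h z + r \<le> t \<longleftrightarrow> (\<forall>s. h z \<le> s \<or> r \<le> t - s)"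
    proof
      assume "\<forall>s. h z \<le> s \<or> r \<le> t - s"
      from this[rule_format, of "(h z + t - r) / 2"] show "h z + r \<le> t" by (auto simp: field_simps)
    qed auto
    then show ?thesis by (simp add: Tfun_def h_def real)
  next
    case PInf
    have "\<not> (h z \<le> h z - 1)" by simp
    then show ?thesis by (auto simp: Tfun_def PInf intro!: exI[of _ "h z - 1"])
  qed (simp add: Tfun_def)
  then have "{z. Tfun A R b z y \<le> ereal t} =
      (\<Inter>s. {z. (norm (y - A z))\<^sup>2 \<le> 2 * b * s} \<union> {z. R z \<le> ereal (t - s)})"
    using b by (auto simp: h_def field_simps)
  moreover have "closedin \<tau> ({z. (norm (y - A z))\<^sup>2 \<le> 2 * b * s} \<union> {z. R z \<le> ereal (t - s)})" for s
    using closedin_residual_sublevel[OF top Acont] compactin_imp_closedin[OF haus Rcomp] by blast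
  ultimately show ?thesis by (auto intro: closedin_Inter)
qed

lemma compactin_sublevel_attains_min:
  fixes f :: "'a \<Rightarrow> 'b::linorder"
  assumes closed: "\<And>z. z \<in> topspace X \<Longrightarrow> closedin X {x \<in> topspace X. f x \<le> f z}"
    and compact: "compactin X {x \<in> topspace X. f x \<le> f z0}" and z0: "z0 \<in> topspace X"
  obtains m where "m \<in> topspace X" and "\<And>z. z \<in> topspace X \<Longrightarrow> f m \<le> f z"
proof -
  define S where "S z = {x \<in> topspace X. f x \<le> f z}" for z
  have "S z0 \<inter> \<Inter> (S ` topspace X) \<noteq> {}"
  proof (rule compactin_fip[THEN iffD1, OF compact[folded S_def], THEN conjunct2, rule_format],
      intro conjI allI impI)
    show "\<forall>C \<in> S ` topspace X. closedin X C" using closed by (auto simp: S_def)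
    fix F assume "finite F \<and> F \<subseteq> S ` topspace X"
    then obtain Z where Z: "Z \<subseteq> topspace X" "finite Z" "F = S ` Z" by (meson finite_subset_image)
    have "Min (f ` insert z0 Z) \<in> f ` insert z0 Z" by (rule Min_in) (use Z in auto)
    then obtain m where m: "m \<in> insert z0 Z" "f m = Min (f ` insert z0 Z)" by (metis imageE)
    have "f m \<le> f z" if "z \<in> insert z0 Z" for z
      unfolding m(2) using Z that by (intro Min_le) auto
    then have "m \<in> S z0 \<inter> \<Inter> F" using m Z z0 by (auto simp: S_def)
    then show "S z0 \<inter> \<Inter> F \<noteq> {}" by blast
  qed
  then show thesis using that by (auto simp: S_def)
qed

lemma Rset_nonempty:
  fixes A :: "'x::real_vector \<Rightarrow> 'y::real_inner"
  assumes tau: "lc_hausdorff_tvs \<tau>" and Rpc: "proper_convex R"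
    and Rcomp: "\<And>c::real. compactin \<tau> {z. R z \<le> ereal c}"
    and Acont: "continuous_map \<tau> weak_topology A" and b: "0 < b"
  shows "Rset A R b y \<noteq> {}"
proof -
  have top: "topspace \<tau> = UNIV" and haus: "Hausdorff_space \<tau>"
    using tau by (auto simp: lc_hausdorff_tvs_def)
  define T where "T z = Tfun A R b z y" for z
  have R_le_T: "R z \<le> T z" for z
    using b by (simp add: T_def Tfun_def add_increasing)
  have closed: "closedin \<tau> {x \<in> topspace \<tau>. T x \<le> T z}" for z
  proof (cases "T z")
    case (real t)
    then show ?thesis using closedin_Tfun_sublevel[OF top haus Rcomp Acont b] by (simp add: T_def top)
  next
    case MInf
    then show ?thesis using R_le_T[of z] Rpc by (simp add: proper_convex_def)
  qed simp
  obtain z0 where "R z0 < \<infinity>" using Rpc unfolding proper_convex_def by blast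
  then obtain r0 where "R z0 = ereal r0" using Rpc unfolding proper_convex_def by (cases "R z0") auto
  then obtain c0 where c0: "T z0 = ereal c0" by (simp add: T_def Tfun_def)
  have "compactin \<tau> {x \<in> topspace \<tau>. T x \<le> T z0}"
    using R_le_T by (intro closed_compactin[OF Rcomp[of c0] _ closed]) (auto simp: c0 intro: order.trans)
  then obtain m where min: "\<And>z. T m \<le> T z"
    using compactin_sublevel_attains_min[of \<tau> T, OF closed] top by auto
  moreover have "m \<in> domR R"
    using R_le_T[of m] min[of z0] by (auto simp: domR_def c0)
  ultimately have "m \<in> Rset A R b y" by (auto simp: Rset_def T_def)
  then show ?thesis by blast
qed

lemma Kset_mono: "x \<in> Kset A R \<nu> \<rho> \<Longrightarrow> \<rho> \<le> \<rho>' \<Longrightarrow> x \<in> Kset A R \<nu> \<rho>'"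
  by (auto simp: Kset_def intro: order.trans)

lemma Kset_residual_le:
  assumes xK: "x \<in> Kset A R \<nu> \<rho>" and b: "0 < b" and w: "w \<in> Rset A R b (A x)"
  shows "norm (A x - A w) \<le> \<rho> * b powr \<nu>"
proof -
  have "ereal (b powr (-\<nu>) * norm (A x - A w)) \<le> rho_nu A R \<nu> x"
    unfolding rho_nu_def by (rule Sup_upper) (use b w in blast)
  also have "\<dots> \<le> ereal \<rho>" using xK by (simp add: Kset_def)
  finally have "b powr (-\<nu>) * norm (A x - A w) \<le> \<rho>" by simp
  then show ?thesis using b by (simp add: powr_minus field_simps)
qed

lemma modulus_upper:
  assumes "x1 \<in> K" "x2 \<in> K" "norm (A x1 - A x2) \<le> d"
  shows "L x1 x2 \<le> modulus L A d K"
  unfolding modulus_def by (rule Sup_upper) (use assms in blast)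

lemma Rset_noisy_data_bounds:
  fixes A :: "'x::real_vector \<Rightarrow> 'y::real_inner"
  assumes Rpc: "proper_convex R" and Alin: "linear A"
    and ex: "\<And>b y. 0 < b \<Longrightarrow> Rset A R b y \<noteq> {}"
    and xK: "x \<in> Kset A R \<nu> \<rho>" and noise: "norm (g - A x) \<le> \<delta>"
    and alpha: "0 < \<alpha>" and xh: "xh \<in> Rset A R \<alpha> g"
  shows "norm (g - A xh) \<le> \<delta> + \<rho> * \<alpha> powr \<nu>" and "norm (A x - A xh) \<le> \<delta> + \<rho> * \<alpha> powr \<nu>"
proof -
  obtain w where w: "w \<in> Rset A R \<alpha> (A x)" using ex[OF alpha] by blast
  have "norm ((g - A xh) - (A x - A w)) \<le> \<delta>" "norm (A xh - A w) \<le> \<delta>"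
    using Rset_nonexpansive[OF Rpc Alin alpha xh w] noise by auto
  moreover have "norm (A x - A w) \<le> \<rho> * \<alpha> powr \<nu>" by (rule Kset_residual_le[OF xK alpha w])
  moreover have "norm (g - A xh) \<le> norm ((g - A xh) - (A x - A w)) + norm (A x - A w)"
    by (metis diff_add_cancel norm_triangle_ineq)
  moreover have "norm (A x - A xh) \<le> norm (A x - A w) + norm (A xh - A w)"
    using norm_diff_triangle_le[of "A x" "A w" _ "A xh"] by (simp add: norm_minus_commute)
  ultimately show "norm (g - A xh) \<le> \<delta> + \<rho> * \<alpha> powr \<nu>"
    and "norm (A x - A xh) \<le> \<delta> + \<rho> * \<alpha> powr \<nu>" by linarith+
qed

lemma Rset_in_Kset:
  fixes A :: "'x::real_vector \<Rightarrow> 'y::real_inner"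
  assumes Rpc: "proper_convex R" and Alin: "linear A"
    and ex: "\<And>b y. 0 < b \<Longrightarrow> Rset A R b y \<noteq> {}"
    and nu: "0 < \<nu>" "\<nu> \<le> 1" and rho: "0 \<le> \<rho>"
    and xK: "x \<in> Kset A R \<nu> \<rho>" and noise: "norm (g - A x) \<le> \<delta>"
    and alpha: "0 < \<alpha>" and xh: "xh \<in> Rset A R \<alpha> g"
  shows "xh \<in> Kset A R \<nu> (\<alpha> powr (-\<nu>) * \<delta> + 2 * \<rho>)"
proof -
  define M where "M = \<alpha> powr (-\<nu>) * (\<delta> + \<rho> * \<alpha> powr \<nu>)"
  have M: "M = \<alpha> powr (-\<nu>) * \<delta> + \<rho>"
    using alpha by (simp add: M_def powr_minus field_simps)
  note residual = Rset_noisy_data_bounds(1)[OF Rpc Alin ex xK noise alpha xh]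
  note error = Rset_noisy_data_bounds(2)[OF Rpc Alin ex xK noise alpha xh]
  have "b powr (-\<nu>) * norm (A xh - A u) \<le> \<alpha> powr (-\<nu>) * \<delta> + 2 * \<rho>"
    if b: "0 < b" and u: "u \<in> Rset A R b (A xh)" for b u
  proof (cases "b \<le> \<alpha>")
    case True
    have "b powr (-\<nu>) * norm (A xh - A u) \<le> b powr (-\<nu>) * (b / \<alpha> * norm (g - A xh))"
      using Rset_image_dist_le[OF Rpc Alin alpha b xh u] by (intro mult_left_mono) auto
    also have "\<dots> = b powr (1 - \<nu>) / \<alpha> * norm (g - A xh)"
      using b by (simp add: powr_diff powr_minus field_simps)
    also have "\<dots> \<le> \<alpha> powr (1 - \<nu>) / \<alpha> * norm (g - A xh)"
      using True b nu alpha by (intro mult_right_mono divide_right_mono powr_mono2) auto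
    also have "\<dots> = \<alpha> powr (-\<nu>) * norm (g - A xh)"
      using alpha by (simp add: powr_diff powr_minus field_simps)
    also have "\<dots> \<le> M"
      unfolding M_def using residual by (intro mult_left_mono) auto
    finally show ?thesis using M rho by linarith
  next
    case False
    obtain w where w: "w \<in> Rset A R b (A x)" using ex[OF b] by blast
    have "norm (A xh - A u) \<le> norm ((A xh - A u) - (A x - A w)) + norm (A x - A w)"
      by (metis diff_add_cancel norm_triangle_ineq)
    also have "\<dots> \<le> (\<delta> + \<rho> * \<alpha> powr \<nu>) + \<rho> * b powr \<nu>"
      using Rset_nonexpansive(1)[OF Rpc Alin b u w] Kset_residual_le[OF xK b w] error
      by (simp add: norm_minus_commute)
    finally have "b powr (-\<nu>) * norm (A xh - A u) \<le> b powr (-\<nu>) * (\<delta> + \<rho> * \<alpha> powr \<nu>) + \<rho>"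
      using b by (simp add: powr_minus field_simps)
    also have "\<dots> \<le> M + \<rho>"
      unfolding M_def using False alpha nu residual
      by (intro add_right_mono mult_right_mono powr_mono2') (auto intro: order.trans[OF norm_ge_zero])
    finally show ?thesis using M by linarith
  qed
  then show ?thesis
    unfolding Kset_def rho_nu_def by (auto intro!: Sup_least)
qed

lemma regularized_error_le_modulus:
  fixes A :: "'x::real_vector \<Rightarrow> 'y::real_inner"
  assumes Rpc: "proper_convex R" and Alin: "linear A"
    and ex: "\<And>b y. 0 < b \<Longrightarrow> Rset A R b y \<noteq> {}"
    and nu: "0 < \<nu>" "\<nu> \<le> 1" and rho: "0 \<le> \<rho>"
    and xK: "x \<in> Kset A R \<nu> \<rho>" and noise: "norm (g - A x) \<le> \<delta>"
    and alpha: "0 < \<alpha>" and xh: "xh \<in> Rset A R \<alpha> g"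
    and c: "0 < c" "c * \<delta> \<le> \<rho> * \<alpha> powr \<nu>" and D: "norm (A x - A xh) \<le> D"
  shows "L x xh \<le> modulus L A D (Kset A R \<nu> ((2 + 1 / c) * \<rho>))"
proof -
  have "\<alpha> powr (-\<nu>) * \<delta> \<le> \<rho> / c"
    using alpha c by (simp add: powr_minus field_simps)
  then have le: "\<alpha> powr (-\<nu>) * \<delta> + 2 * \<rho> \<le> (2 + 1 / c) * \<rho>"
    by (simp add: ring_distribs)
  have "xh \<in> Kset A R \<nu> (\<alpha> powr (-\<nu>) * \<delta> + 2 * \<rho>)"
    using Rpc Alin ex nu rho xK noise alpha xh by (rule Rset_in_Kset)
  then have "xh \<in> Kset A R \<nu> ((2 + 1 / c) * \<rho>)" using le by (rule Kset_mono)
  moreover have "x \<in> Kset A R \<nu> ((2 + 1 / c) * \<rho>)"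
    using rho c by (intro Kset_mono[OF xK]) (simp add: algebra_simps)
  ultimately show ?thesis using D by (intro modulus_upper)
qed

lemma powr_scaled_rate_le_iff:
  fixes c \<nu> \<rho> \<delta> \<alpha> :: real
  assumes "0 < \<nu>" "0 < \<rho>" "0 < \<delta>" "0 < \<alpha>" "0 < c"
  shows "c * \<rho> powr (-1/\<nu>) * \<delta> powr (1/\<nu>) \<le> \<alpha> \<longleftrightarrow> c powr \<nu> * \<delta> \<le> \<rho> * \<alpha> powr \<nu>"
    and "\<alpha> \<le> c * \<rho> powr (-1/\<nu>) * \<delta> powr (1/\<nu>) \<longleftrightarrow> \<rho> * \<alpha> powr \<nu> \<le> c powr \<nu> * \<delta>"
proof -
  define a where "a = c * \<rho> powr (-1/\<nu>) * \<delta> powr (1/\<nu>)"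
  have "a powr \<nu> = c powr \<nu> * (\<rho> powr (-1/\<nu>)) powr \<nu> * (\<delta> powr (1/\<nu>)) powr \<nu>"
    using assms by (simp add: a_def powr_mult)
  also have "\<dots> = c powr \<nu> * \<rho> powr (-1) * \<delta> powr 1"
    using assms by (simp add: powr_powr)
  also have "\<dots> = c powr \<nu> * \<delta> / \<rho>"
    using assms by (simp add: powr_minus divide_inverse)
  finally have a: "a powr \<nu> = c powr \<nu> * \<delta> / \<rho>" .
  have mono: "s \<le> t \<longleftrightarrow> s powr \<nu> \<le> t powr \<nu>" if "0 < s" "0 < t" for s t
    using that assms(1) by (meson not_le powr_less_mono2 powr_mono2 less_imp_le)
  have "0 < a" using assms by (simp add: a_def)
  then show "a \<le> \<alpha> \<longleftrightarrow> c powr \<nu> * \<delta> \<le> \<rho> * \<alpha> powr \<nu>"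
    and "\<alpha> \<le> a \<longleftrightarrow> \<rho> * \<alpha> powr \<nu> \<le> c powr \<nu> * \<delta>"
    using mono[of a \<alpha>] mono[of \<alpha> a] a assms by (simp_all add: field_simps)
qed

theorem theorem1:
  fixes \<tau> :: "('x::banach) topology"
    and R :: "'x \<Rightarrow> ereal"
    and A :: "'x \<Rightarrow> 'y::{real_inner, complete_space}"
    and L :: "'x \<Rightarrow> 'x \<Rightarrow> ereal"
    and \<nu> \<rho> \<delta> \<alpha> :: real and x xh :: 'x and g\<delta> :: 'y
  assumes tau: "lc_hausdorff_tvs \<tau>"
    and Rpc: "proper_convex R"
    and Rcomp: "\<And>c::real. compactin \<tau> {z. R z \<le> ereal c}"
    and Alin: "linear A"
    and Acont: "continuous_map \<tau> weak_topology A"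
    and Lnn: "\<And>a b. L a b \<ge> 0"
    and Ltri: "\<And>a b c. L a c \<le> L a b + L b c"
    and nu: "0 < \<nu>" "\<nu> \<le> 1"
    and rho: "0 < \<rho>" and delta: "0 < \<delta>"
    and xK: "x \<in> Kset A R \<nu> \<rho>"
    and noise: "norm (g\<delta> - A x) \<le> \<delta>"
    and alpha: "0 < \<alpha>"
    and xh: "xh \<in> Rset A R \<alpha> g\<delta>"
  shows "(\<forall>cl cr. 0 < cl \<and> cl \<le> cr \<and>
            cl * \<rho> powr (-1/\<nu>) * \<delta> powr (1/\<nu>) \<le> \<alpha> \<and>
            \<alpha> \<le> cr * \<rho> powr (-1/\<nu>) * \<delta> powr (1/\<nu>) \<longrightarrow>
            L x xh \<le> modulus L A ((1 + cr powr \<nu>) * \<delta>) (Kset A R \<nu> ((2 + cl powr (-\<nu>)) * \<rho>)))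
       \<and> (\<forall>cD CD. 1 < cD \<and> cD < CD \<and>
            cD * \<delta> \<le> norm (g\<delta> - A xh) \<and> norm (g\<delta> - A xh) \<le> CD * \<delta> \<longrightarrow>
            L x xh \<le> modulus L A ((1 + CD) * \<delta>) (Kset A R \<nu> ((2 + 1 / (cD - 1)) * \<rho>)))"
proof -
  have ex: "\<And>b y. 0 < b \<Longrightarrow> Rset A R b y \<noteq> {}"
    by (rule Rset_nonempty[OF tau Rpc Rcomp Acont])
  note bounds = Rset_noisy_data_bounds[OF Rpc Alin ex xK noise alpha xh]
  note error_le_modulus =
    regularized_error_le_modulus[OF Rpc Alin ex nu less_imp_le[OF rho] xK noise alpha xh]
  show ?thesis
  proof (intro conjI allI impI)
    fix cl cr :: real
    assume choice: "0 < cl \<and> cl \<le> cr \<and> cl * \<rho> powr (-1/\<nu>) * \<delta> powr (1/\<nu>) \<le> \<alpha> \<and>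
      \<alpha> \<le> cr * \<rho> powr (-1/\<nu>) * \<delta> powr (1/\<nu>)"
    then have "cl powr \<nu> * \<delta> \<le> \<rho> * \<alpha> powr \<nu>" and "\<rho> * \<alpha> powr \<nu> \<le> cr powr \<nu> * \<delta>"
      using powr_scaled_rate_le_iff[OF nu(1) rho delta alpha] by auto
    then show "L x xh \<le> modulus L A ((1 + cr powr \<nu>) * \<delta>) (Kset A R \<nu> ((2 + cl powr (-\<nu>)) * \<rho>))"
      using error_le_modulus[of "cl powr \<nu>" "(1 + cr powr \<nu>) * \<delta>" L] bounds(2) choice
      by (simp add: powr_minus_divide algebra_simps)
  next
    fix cD CD :: real
    assume choice: "1 < cD \<and> cD < CD \<and> cD * \<delta> \<le> norm (g\<delta> - A xh) \<and> norm (g\<delta> - A xh) \<le> CD * \<delta>"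
    then have "(cD - 1) * \<delta> \<le> \<rho> * \<alpha> powr \<nu>" using bounds(1) by (simp add: algebra_simps)
    moreover have "norm (A x - A xh) \<le> (1 + CD) * \<delta>"
      using norm_diff_triangle_le[of "A x" g\<delta> \<delta> "A xh" "CD * \<delta>"] noise choice
      by (simp add: norm_minus_commute algebra_simps)
    ultimately show "L x xh \<le> modulus L A ((1 + CD) * \<delta>) (Kset A R \<nu> ((2 + 1 / (cD - 1)) * \<rho>))"
      using error_le_modulus choice by simp
  qed
qed

end
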